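(* Let $0<\gamma'<\gamma$ and $\varepsilon>0$. For any finite class $\mathcal{H}$ of hypotheses $\{-1,+1\}^d\to\{-1,+1\}$, there exists an $\varepsilon$-sample-$\nabla_0$DP algorithm that, given a finite set $S$ of labeled examples, outputs $h^{priv}\in\mathcal{H}$ such that $$\mathbb{E}[\mathcal{R}_{\gamma'}(h^{priv};S)]\le\inf_{h\in\mathcal{H}}\mathcal{R}_\gamma(h;S)+O\!\left(\frac{\log|\mathcal{H}|}{\varepsilon(\gamma-\gamma')d\cdot|S|}\right).$$
   Context: Labeled examples are $(x,y)\in\{-1,+1\}^d\times\{-1,+1\}$. For a hypothesis $h$ and distribution $\mathcal{D}$, $\mathcal{R}_\gamma(h,\mathcal{D})=\Pr_{(x,y)\sim\mathcal{D}}[\exists\check x\in\{-1,+1\}^d: h(\check x)\ne y\wedge\|\check x-x\|_0\le\gamma d]$ with $\|\cdot\|_0$ the Hamming distance; $\mathcal{R}_\gamma(h;S)$ is this quantity for $\mathcal{D}$ uniform on $S$. An algorithm $M$ on datasets of labeled examples is $\varepsilon$-sample-$\nabla_0$DP if $\Pr[M(S)\in E]\le e^\varepsilon\Pr[M(S')\in E]$ for all $E$ whenever $S,S'$ differ only in a single coordinate of the feature vector of a single example (labels unchanged). *)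

theory Defs
  imports "HOL-Probability.Probability"
begin

text \<open>Encoding: the sign values -1 and +1 are represented by False and True.
  A feature vector in the hypercube of dimension d is a bool list of length d;
  a labeled example is a pair (x, y); a dataset is a list of labeled examples
  (the empirical distribution is uniform over its entries).\<close>

type_synonym point = "bool list"
type_synonym example = "point \<times> bool"
type_synonym hypothesis = "point \<Rightarrow> bool"

definition cube :: "nat \<Rightarrow> point set" where
  "cube d = {x. length x = d}"

definition hamming :: "point \<Rightarrow> point \<Rightarrow> nat" where
  "hamming x y = card {i. i < length x \<and> x ! i \<noteq> y ! i}"

definition robust_err :: "real \<Rightarrow> nat \<Rightarrow> hypothesis \<Rightarrow> example \<Rightarrow> bool" where
  "robust_err \<gamma> d h e =
     (\<exists>x' \<in> cube d. h x' \<noteq> snd e \<and> real (hamming x' (fst e)) \<le> \<gamma> * real d)"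

definition emp_robust_risk :: "real \<Rightarrow> nat \<Rightarrow> hypothesis \<Rightarrow> example list \<Rightarrow> real" where
  "emp_robust_risk \<gamma> d h S =
     real (length (filter (robust_err \<gamma> d h) S)) / real (length S)"

definition valid_dataset :: "nat \<Rightarrow> example list \<Rightarrow> bool" where
  "valid_dataset d S = (\<forall>e \<in> set S. fst e \<in> cube d)"

definition sample_neighbors :: "nat \<Rightarrow> example list \<Rightarrow> example list \<Rightarrow> bool" where
  "sample_neighbors d S S' =
     (valid_dataset d S \<and> valid_dataset d S' \<and> length S = length S' \<and>
      (\<exists>i < length S. snd (S ! i) = snd (S' ! i) \<and>
          hamming (fst (S ! i)) (fst (S' ! i)) = 1 \<and>
          (\<forall>j < length S. j \<noteq> i \<longrightarrow> S ! j = S' ! j)))"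

definition sample_nabla0_DP ::
    "real \<Rightarrow> nat \<Rightarrow> (example list \<Rightarrow> hypothesis pmf) \<Rightarrow> bool" where
  "sample_nabla0_DP \<epsilon> d M =
     (\<forall>S S' E. sample_neighbors d S S' \<longrightarrow>
        measure_pmf.prob (M S) E \<le> exp \<epsilon> * measure_pmf.prob (M S') E)"

end

theory Submission
  imports Defs
begin

text \<open>The algorithm is the exponential mechanism over \<open>H\<close> for a Lipschitz surrogate of the
  robust loss. The surrogate loss of \<open>h\<close> on \<open>(x, y)\<close> is the largest value, over the points
  \<open>x'\<close> with \<open>h x' \<noteq> y\<close>, of a ramp in the Hamming distance from \<open>x'\<close> to \<open>x\<close> that is \<open>1\<close> up to
  radius \<open>\<gamma>' d\<close> and \<open>0\<close> from radius \<open>\<gamma> d\<close> on. It lies between the \<open>\<gamma>'\<close>-robust and the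
  \<open>\<gamma>\<close>-robust 0-1 loss, and flipping one coordinate of \<open>x\<close> changes it by at most
  \<open>1 / ((\<gamma> - \<gamma>') d)\<close>. Sampling \<open>h\<close> with probability proportional to \<open>exp (- \<beta> L h)\<close>, where \<open>L\<close>
  is the total surrogate loss on \<open>S\<close> and \<open>\<beta> = \<epsilon> (\<gamma> - \<gamma>') d / 2\<close>, is therefore \<open>\<epsilon>\<close>-private,
  and since entropy is at most \<open>ln |H|\<close> the Gibbs variational principle bounds its expected
  total surrogate loss by \<open>min L + ln |H| / \<beta>\<close>.\<close>

definition gibbs_pmf :: "real \<Rightarrow> ('a \<Rightarrow> real) \<Rightarrow> 'a set \<Rightarrow> 'a pmf" where
  "gibbs_pmf \<beta> L H =
     embed_pmf (\<lambda>h. if h \<in> H then exp (- \<beta> * L h) / (\<Sum>g\<in>H. exp (- \<beta> * L g)) else 0)"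

lemma pmf_gibbs_pmf:
  assumes "finite H" "H \<noteq> {}"
  shows "pmf (gibbs_pmf \<beta> L H) h =
           (if h \<in> H then exp (- \<beta> * L h) / (\<Sum>g\<in>H. exp (- \<beta> * L g)) else 0)"
proof -
  let ?Z = "\<Sum>g\<in>H. exp (- \<beta> * L g)"
  define f where "f = (\<lambda>h. if h \<in> H then exp (- \<beta> * L h) / ?Z else 0)"
  have "?Z > 0"
    using assms by (simp add: sum_pos)
  then have nonneg: "0 \<le> f h" for h
    by (simp add: f_def)
  have "(\<integral>\<^sup>+h. ennreal (f h) \<partial>count_space UNIV) = (\<Sum>h\<in>H. ennreal (f h))"
    using assms by (intro nn_integral_count_space') (auto simp: f_def)
  also have "\<dots> = ennreal (\<Sum>h\<in>H. f h)"
    using nonneg by (intro sum_ennreal)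
  also have "(\<Sum>h\<in>H. f h) = 1"
    using \<open>?Z > 0\<close> by (simp add: f_def flip: sum_divide_distrib)
  finally have "pmf (embed_pmf f) h = f h"
    using nonneg by (intro pmf_embed_pmf) auto
  then show ?thesis
    by (simp add: gibbs_pmf_def f_def)
qed

lemma set_pmf_gibbs_pmf:
  assumes "finite H" "H \<noteq> {}"
  shows "set_pmf (gibbs_pmf \<beta> L H) = H"
proof -
  have "(\<Sum>g\<in>H. exp (- \<beta> * L g)) > 0"
    using assms by (simp add: sum_pos)
  then show ?thesis
    by (auto simp: set_pmf_eq pmf_gibbs_pmf[OF assms])
qed

lemma measure_pmf_prob_le_scaled:
  assumes "finite (set_pmf p)" "0 \<le> c" "\<And>x. pmf p x \<le> c * pmf q x"
  shows "measure_pmf.prob p E \<le> c * measure_pmf.prob q E"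
proof -
  let ?A = "E \<inter> set_pmf p"
  have "measure_pmf.prob p E = measure_pmf.prob p ?A"
    by (rule measure_Int_set_pmf[symmetric])
  also have "\<dots> = (\<Sum>x\<in>?A. pmf p x)"
    using assms(1) by (simp add: measure_measure_pmf_finite)
  also have "\<dots> \<le> c * (\<Sum>x\<in>?A. pmf q x)"
    using assms(3) by (simp add: sum_distrib_left sum_mono)
  also have "(\<Sum>x\<in>?A. pmf q x) = measure_pmf.prob q ?A"
    using assms(1) by (simp add: measure_measure_pmf_finite)
  also have "\<dots> \<le> measure_pmf.prob q E"
    by (intro measure_pmf.finite_measure_mono) auto
  finally show ?thesis
    using assms(2) by (simp add: mult_left_mono)
qed

lemma pmf_gibbs_pmf_le:
  assumes "finite H" "H \<noteq> {}" "0 \<le> \<beta>" and close: "\<And>h. h \<in> H \<Longrightarrow> \<bar>L h - L' h\<bar> \<le> \<Delta>"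
  shows "pmf (gibbs_pmf \<beta> L H) h \<le> exp (2 * \<beta> * \<Delta>) * pmf (gibbs_pmf \<beta> L' H) h"
proof (cases "h \<in> H")
  case True
  define Z where "Z L = (\<Sum>g\<in>H. exp (- \<beta> * L g))" for L :: "'a \<Rightarrow> real"
  have weight_le: "exp (- \<beta> * L1 g) \<le> exp (\<beta> * \<Delta>) * exp (- \<beta> * L2 g)"
    if "g \<in> H" "\<bar>L1 g - L2 g\<bar> \<le> \<Delta>" for L1 L2 g
  proof -
    have "\<beta> * (L2 g - L1 g) \<le> \<beta> * \<Delta>"
      using that assms(3) by (intro mult_left_mono) auto
    then show ?thesis
      by (simp add: algebra_simps flip: exp_add)
  qed
  have Z_pos: "Z L'' > 0" for L''
    using assms(1,2) by (simp add: Z_def sum_pos)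
  have "Z L' \<le> exp (\<beta> * \<Delta>) * Z L"
    unfolding Z_def sum_distrib_left
    using close by (intro sum_mono weight_le) (auto simp: abs_minus_commute)
  then have "1 / Z L \<le> exp (\<beta> * \<Delta>) / Z L'"
    using Z_pos by (simp add: field_simps)
  with weight_le[of h L L', OF True close[OF True]]
  have "exp (- \<beta> * L h) * (1 / Z L)
          \<le> (exp (\<beta> * \<Delta>) * exp (- \<beta> * L' h)) * (exp (\<beta> * \<Delta>) / Z L')"
    using Z_pos by (intro mult_mono) (auto intro: less_imp_le)
  also have "\<dots> = (exp (\<beta> * \<Delta>) * exp (\<beta> * \<Delta>)) * (exp (- \<beta> * L' h) / Z L')"
    by simp
  also have "exp (\<beta> * \<Delta>) * exp (\<beta> * \<Delta>) = exp (2 * \<beta> * \<Delta>)"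
    by (simp flip: exp_add)
  finally show ?thesis
    using True by (simp add: pmf_gibbs_pmf[OF assms(1,2)] Z_def)
next
  case False
  then show ?thesis
    by (simp add: pmf_gibbs_pmf[OF assms(1,2)])
qed

lemma measure_gibbs_pmf_le:
  assumes "finite H" "H \<noteq> {}" "0 \<le> \<beta>" "\<And>h. h \<in> H \<Longrightarrow> \<bar>L h - L' h\<bar> \<le> \<Delta>"
  shows "measure_pmf.prob (gibbs_pmf \<beta> L H) E
           \<le> exp (2 * \<beta> * \<Delta>) * measure_pmf.prob (gibbs_pmf \<beta> L' H) E"
  using assms by (intro measure_pmf_prob_le_scaled pmf_gibbs_pmf_le) (auto simp: set_pmf_gibbs_pmf)

lemma entropy_le_ln_card:
  assumes "finite H" "\<And>h. h \<in> H \<Longrightarrow> 0 < p h" "(\<Sum>h\<in>H. p h) = 1"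
  shows "(\<Sum>h\<in>H. - p h * ln (p h)) \<le> ln (card H)"
proof -
  define N where "N = real (card H)"
  have "H \<noteq> {}"
    using assms(3) by auto
  then have "N > 0"
    using assms(1) by (simp add: N_def card_gt_0_iff)
  have "p h * ln (1 / (N * p h)) = - p h * ln (p h) - p h * ln N" if "h \<in> H" for h
    using assms(2)[OF that] \<open>N > 0\<close> by (simp add: ln_div ln_mult algebra_simps)
  then have "(\<Sum>h\<in>H. - p h * ln (p h)) - ln N = (\<Sum>h\<in>H. p h * ln (1 / (N * p h)))"
    using assms(3) by (simp add: sum_subtractf flip: sum_distrib_right)
  also have "\<dots> \<le> (\<Sum>h\<in>H. p h * (1 / (N * p h) - 1))"
    using assms(2) \<open>N > 0\<close> by (intro sum_mono mult_left_mono ln_le_minus_one) (auto intro: less_imp_le)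
  also have "\<dots> = (\<Sum>h\<in>H. 1 / N - p h)"
    using assms(2) \<open>N > 0\<close> by (intro sum.cong refl) (force simp: field_simps)
  also have "\<dots> = 0"
    using assms(3) \<open>N > 0\<close> by (simp add: sum_subtractf N_def)
  finally show ?thesis
    by (simp add: N_def)
qed

lemma expectation_gibbs_pmf_le:
  assumes "finite H" "h\<^sub>0 \<in> H" "0 < \<beta>"
  shows "measure_pmf.expectation (gibbs_pmf \<beta> L H) L \<le> L h\<^sub>0 + ln (card H) / \<beta>"
proof -
  have "H \<noteq> {}"
    using assms(2) by auto
  define Z where "Z = (\<Sum>g\<in>H. exp (- \<beta> * L g))"
  define p where "p = pmf (gibbs_pmf \<beta> L H)"
  have "Z > 0"
    using assms(1) \<open>H \<noteq> {}\<close> by (simp add: Z_def sum_pos)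
  have p_eq: "p h = exp (- \<beta> * L h) / Z" if "h \<in> H" for h
    using that by (simp add: p_def Z_def pmf_gibbs_pmf[OF assms(1) \<open>H \<noteq> {}\<close>])
  then have p_pos: "0 < p h" if "h \<in> H" for h
    using that \<open>Z > 0\<close> by simp
  have sum_p: "(\<Sum>h\<in>H. p h) = 1"
    using \<open>Z > 0\<close> by (simp add: p_eq Z_def flip: sum_divide_distrib)
  have L_eq: "L h = (- ln (p h) - ln Z) / \<beta>" if "h \<in> H" for h
    using that \<open>Z > 0\<close> assms(3) by (simp add: p_eq ln_div field_simps)
  have "exp (- \<beta> * L h\<^sub>0) \<le> Z"
    unfolding Z_def using assms(1,2) by (intro member_le_sum) auto
  then have "- ln Z \<le> \<beta> * L h\<^sub>0"
    using \<open>Z > 0\<close> ln_ge_iff[of Z "- \<beta> * L h\<^sub>0"] by simp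
  have "measure_pmf.expectation (gibbs_pmf \<beta> L H) L = (\<Sum>h\<in>H. L h * p h)"
    unfolding p_def using set_pmf_gibbs_pmf[OF assms(1) \<open>H \<noteq> {}\<close>]
    by (intro integral_measure_pmf_real[OF assms(1)]) auto
  also have "\<dots> = (\<Sum>h\<in>H. (- p h * ln (p h) - p h * ln Z) / \<beta>)"
    using assms(3) by (intro sum.cong) (simp_all add: L_eq field_simps)
  also have "\<dots> = ((\<Sum>h\<in>H. - p h * ln (p h)) - ln Z) / \<beta>"
    using sum_p by (simp add: sum_subtractf flip: sum_divide_distrib sum_distrib_right)
  also have "\<dots> \<le> (ln (card H) + \<beta> * L h\<^sub>0) / \<beta>"
    using entropy_le_ln_card[OF assms(1) p_pos sum_p] \<open>- ln Z \<le> \<beta> * L h\<^sub>0\<close> assms(3)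
    by (intro divide_right_mono) auto
  also have "\<dots> = L h\<^sub>0 + ln (card H) / \<beta>"
    using assms(3) by (simp add: field_simps)
  finally show ?thesis .
qed

lemma finite_cube: "finite (cube d)"
  using finite_lists_length_eq[of "UNIV :: bool set" d] by (simp add: cube_def)

lemma hamming_commute: "length x = length y \<Longrightarrow> hamming x y = hamming y x"
  unfolding hamming_def by metis

lemma hamming_triangle:
  assumes "length x = length y" "length y = length z"
  shows "hamming x z \<le> hamming x y + hamming y z"
proof -
  let ?D = "\<lambda>u v. {i. i < length u \<and> u ! i \<noteq> v ! i}"
  have "?D x z \<subseteq> ?D x y \<union> ?D y z"
    using assms by auto
  then have "card (?D x z) \<le> card (?D x y \<union> ?D y z)"
    by (intro card_mono) auto
  also have "\<dots> \<le> card (?D x y) + card (?D y z)"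
    by (rule card_Un_le)
  finally show ?thesis
    unfolding hamming_def .
qed

definition ramp :: "real \<Rightarrow> real \<Rightarrow> real \<Rightarrow> real" where
  "ramp a b t = min 1 (max 0 ((b - t) / (b - a)))"

lemma ramp_bounds: "0 \<le> ramp a b t" "ramp a b t \<le> 1"
  by (simp_all add: ramp_def)

lemma ramp_eq_1: "a < b \<Longrightarrow> t \<le> a \<Longrightarrow> ramp a b t = 1"
  by (simp add: ramp_def)

lemma ramp_eq_0: "a < b \<Longrightarrow> b \<le> t \<Longrightarrow> ramp a b t = 0"
  by (simp add: ramp_def divide_nonpos_pos)

lemma ramp_le_ramp_add:
  assumes "a < b" "s \<le> t + \<delta>" "0 \<le> \<delta>"
  shows "ramp a b t \<le> ramp a b s + \<delta> / (b - a)"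
proof -
  have "(b - t) / (b - a) \<le> (b - s) / (b - a) + \<delta> / (b - a)"
    using assms by (simp add: divide_right_mono flip: add_divide_distrib)
  moreover have "0 \<le> \<delta> / (b - a)"
    using assms by simp
  ultimately show ?thesis
    unfolding ramp_def by linarith
qed

definition soft_robust_loss :: "real \<Rightarrow> real \<Rightarrow> nat \<Rightarrow> hypothesis \<Rightarrow> example \<Rightarrow> real" where
  "soft_robust_loss \<gamma>' \<gamma> d h e =
     Max (insert 0 ((\<lambda>x'. ramp (\<gamma>' * d) (\<gamma> * d) (hamming x' (fst e))) ` {x' \<in> cube d. h x' \<noteq> snd e}))"

definition soft_robust_cost :: "real \<Rightarrow> real \<Rightarrow> nat \<Rightarrow> hypothesis \<Rightarrow> example list \<Rightarrow> real" where
  "soft_robust_cost \<gamma>' \<gamma> d h S = (\<Sum>e\<leftarrow>S. soft_robust_loss \<gamma>' \<gamma> d h e)"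

lemma soft_robust_loss_nonneg: "0 \<le> soft_robust_loss \<gamma>' \<gamma> d h e"
  by (simp add: soft_robust_loss_def finite_cube)

lemma ramp_le_soft_robust_loss:
  fixes \<gamma>' \<gamma> :: real
  assumes "x' \<in> cube d" "h x' \<noteq> snd e"
  shows "ramp (\<gamma>' * d) (\<gamma> * d) (hamming x' (fst e)) \<le> soft_robust_loss \<gamma>' \<gamma> d h e"
  using assms unfolding soft_robust_loss_def by (intro Max_ge) (auto simp: finite_cube)

lemma of_nat_length_filter: "of_nat (length (filter P xs)) = (\<Sum>x\<leftarrow>xs. of_bool (P x))"
  by (induction xs) auto

definition robust_exp_mechanism ::
    "real \<Rightarrow> real \<Rightarrow> real \<Rightarrow> nat \<Rightarrow> hypothesis set \<Rightarrow> example list \<Rightarrow> hypothesis pmf" where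
  "robust_exp_mechanism \<epsilon> \<gamma>' \<gamma> d H S =
     gibbs_pmf (\<epsilon> * (\<gamma> - \<gamma>') * d / 2) (\<lambda>h. soft_robust_cost \<gamma>' \<gamma> d h S) H"

lemma set_pmf_robust_exp_mechanism:
  "finite H \<Longrightarrow> H \<noteq> {} \<Longrightarrow> set_pmf (robust_exp_mechanism \<epsilon> \<gamma>' \<gamma> d H S) = H"
  by (simp add: robust_exp_mechanism_def set_pmf_gibbs_pmf)

context
  fixes \<gamma>' \<gamma> :: real and d :: nat
  assumes radii: "\<gamma>' < \<gamma>" "0 < d"
begin

lemma of_bool_robust_err_le_soft_robust_loss:
  "of_bool (robust_err \<gamma>' d h e) \<le> soft_robust_loss \<gamma>' \<gamma> d h e"
proof (cases "robust_err \<gamma>' d h e")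
  case True
  then obtain x' where x': "x' \<in> cube d" "h x' \<noteq> snd e" "hamming x' (fst e) \<le> \<gamma>' * d"
    unfolding robust_err_def by auto
  have "ramp (\<gamma>' * d) (\<gamma> * d) (hamming x' (fst e)) \<le> soft_robust_loss \<gamma>' \<gamma> d h e"
    using x'(1,2) by (rule ramp_le_soft_robust_loss)
  moreover have "ramp (\<gamma>' * d) (\<gamma> * d) (hamming x' (fst e)) = 1"
    using radii x'(3) by (intro ramp_eq_1) auto
  ultimately show ?thesis
    using True by simp
qed (simp add: soft_robust_loss_nonneg)

lemma soft_robust_loss_le_of_bool_robust_err:
  "soft_robust_loss \<gamma>' \<gamma> d h e \<le> of_bool (robust_err \<gamma> d h e)"
proof (cases "robust_err \<gamma> d h e")
  case True
  then show ?thesis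
    by (simp add: soft_robust_loss_def finite_cube ramp_bounds)
next
  case False
  then have "ramp (\<gamma>' * d) (\<gamma> * d) (hamming x' (fst e)) = 0" if "x' \<in> cube d" "h x' \<noteq> snd e" for x'
    using that radii unfolding robust_err_def by (intro ramp_eq_0) auto
  with False show ?thesis
    by (simp add: soft_robust_loss_def finite_cube)
qed

lemma soft_robust_loss_lipschitz:
  assumes "fst e\<^sub>1 \<in> cube d" "fst e\<^sub>2 \<in> cube d" "snd e\<^sub>1 = snd e\<^sub>2"
  shows "soft_robust_loss \<gamma>' \<gamma> d h e\<^sub>1
           \<le> soft_robust_loss \<gamma>' \<gamma> d h e\<^sub>2 + hamming (fst e\<^sub>1) (fst e\<^sub>2) / ((\<gamma> - \<gamma>') * d)"
proof -
  let ?\<delta> = "hamming (fst e\<^sub>1) (fst e\<^sub>2) / ((\<gamma> - \<gamma>') * d)"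
  have "ramp (\<gamma>' * d) (\<gamma> * d) (hamming x' (fst e\<^sub>1)) \<le> soft_robust_loss \<gamma>' \<gamma> d h e\<^sub>2 + ?\<delta>"
    if "x' \<in> cube d" "h x' \<noteq> snd e\<^sub>1" for x'
  proof -
    have "hamming x' (fst e\<^sub>2) \<le> hamming x' (fst e\<^sub>1) + hamming (fst e\<^sub>1) (fst e\<^sub>2)"
      using that assms by (intro hamming_triangle) (auto simp: cube_def)
    then have "ramp (\<gamma>' * d) (\<gamma> * d) (hamming x' (fst e\<^sub>1))
                 \<le> ramp (\<gamma>' * d) (\<gamma> * d) (hamming x' (fst e\<^sub>2)) + ?\<delta>"
      using radii ramp_le_ramp_add[of "\<gamma>' * d" "\<gamma> * d"] by (simp add: left_diff_distrib)
    also have "\<dots> \<le> soft_robust_loss \<gamma>' \<gamma> d h e\<^sub>2 + ?\<delta>"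
      using ramp_le_soft_robust_loss[OF that(1)] that(2) assms(3) by simp
    finally show ?thesis .
  qed
  moreover have "0 \<le> soft_robust_loss \<gamma>' \<gamma> d h e\<^sub>2 + ?\<delta>"
    using radii soft_robust_loss_nonneg[of \<gamma>' \<gamma> d h e\<^sub>2] by simp
  ultimately show ?thesis
    by (auto simp: soft_robust_loss_def[of _ _ _ _ e\<^sub>1] finite_cube)
qed

lemma emp_robust_risk_le_soft_robust_cost:
  "emp_robust_risk \<gamma>' d h S \<le> soft_robust_cost \<gamma>' \<gamma> d h S / length S"
  unfolding emp_robust_risk_def soft_robust_cost_def of_nat_length_filter
  by (intro divide_right_mono sum_list_mono of_bool_robust_err_le_soft_robust_loss) auto

lemma soft_robust_cost_le_emp_robust_risk:
  "soft_robust_cost \<gamma>' \<gamma> d h S / length S \<le> emp_robust_risk \<gamma> d h S"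
  unfolding emp_robust_risk_def soft_robust_cost_def of_nat_length_filter
  by (intro divide_right_mono sum_list_mono soft_robust_loss_le_of_bool_robust_err) auto

lemma soft_robust_cost_sensitivity:
  assumes "sample_neighbors d S S'"
  shows "\<bar>soft_robust_cost \<gamma>' \<gamma> d h S - soft_robust_cost \<gamma>' \<gamma> d h S'\<bar> \<le> 1 / ((\<gamma> - \<gamma>') * d)"
proof -
  let ?f = "soft_robust_loss \<gamma>' \<gamma> d h"
  obtain i where i: "i < length S" "snd (S ! i) = snd (S' ! i)" "hamming (fst (S ! i)) (fst (S' ! i)) = 1"
    and same: "\<And>j. j < length S \<Longrightarrow> j \<noteq> i \<Longrightarrow> S ! j = S' ! j"
    and "length S = length S'" "valid_dataset d S" "valid_dataset d S'"
    using assms unfolding sample_neighbors_def by blast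
  then have cube: "fst (S ! i) \<in> cube d" "fst (S' ! i) \<in> cube d"
    unfolding valid_dataset_def by auto
  have "soft_robust_cost \<gamma>' \<gamma> d h S - soft_robust_cost \<gamma>' \<gamma> d h S'
          = (\<Sum>j\<in>{0..<length S}. ?f (S ! j) - ?f (S' ! j))"
    using \<open>length S = length S'\<close> by (simp add: soft_robust_cost_def sum_list_sum_nth sum_subtractf)
  also have "\<dots> = ?f (S ! i) - ?f (S' ! i)"
    using i(1) same by (subst sum.mono_neutral_right[where S = "{i}"]) auto
  finally show ?thesis
    using soft_robust_loss_lipschitz[of "S ! i" "S' ! i" h] soft_robust_loss_lipschitz[of "S' ! i" "S ! i" h]
      cube i hamming_commute[of "fst (S ! i)" "fst (S' ! i)"]
    by (auto simp: cube_def)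
qed

lemma sample_nabla0_DP_robust_exp_mechanism:
  assumes "finite H" "H \<noteq> {}" "0 \<le> \<epsilon>"
  shows "sample_nabla0_DP \<epsilon> d (robust_exp_mechanism \<epsilon> \<gamma>' \<gamma> d H)"
  unfolding sample_nabla0_DP_def
proof (intro allI impI)
  fix S S' E
  assume "sample_neighbors d S S'"
  define \<beta> where "\<beta> = \<epsilon> * (\<gamma> - \<gamma>') * d / 2"
  have "0 \<le> \<beta>"
    using radii assms(3) by (simp add: \<beta>_def)
  have "2 * \<beta> * (1 / ((\<gamma> - \<gamma>') * d)) = \<epsilon>"
    using radii by (simp add: \<beta>_def)
  then show "measure_pmf.prob (robust_exp_mechanism \<epsilon> \<gamma>' \<gamma> d H S) E
               \<le> exp \<epsilon> * measure_pmf.prob (robust_exp_mechanism \<epsilon> \<gamma>' \<gamma> d H S') E"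
    using measure_gibbs_pmf_le[OF assms(1,2) \<open>0 \<le> \<beta>\<close> soft_robust_cost_sensitivity[OF \<open>sample_neighbors d S S'\<close>]]
    by (simp add: robust_exp_mechanism_def \<beta>_def)
qed

lemma expectation_robust_exp_mechanism_le:
  assumes "finite H" "H \<noteq> {}" "0 < \<epsilon>"
  shows "measure_pmf.expectation (robust_exp_mechanism \<epsilon> \<gamma>' \<gamma> d H S) (\<lambda>h. emp_robust_risk \<gamma>' d h S)
           \<le> (INF h\<in>H. emp_robust_risk \<gamma> d h S) + 2 * ln (card H) / (\<epsilon> * (\<gamma> - \<gamma>') * d * length S)"
proof -
  define \<beta> where "\<beta> = \<epsilon> * (\<gamma> - \<gamma>') * d / 2"
  let ?M = "robust_exp_mechanism \<epsilon> \<gamma>' \<gamma> d H S"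
  let ?c = "\<lambda>h. soft_robust_cost \<gamma>' \<gamma> d h S"
  let ?B = "2 * ln (card H) / (\<epsilon> * (\<gamma> - \<gamma>') * d * length S)"
  have "0 < \<beta>"
    using radii assms(3) by (simp add: \<beta>_def)
  have "measure_pmf.expectation ?M (\<lambda>h. emp_robust_risk \<gamma>' d h S)
          \<le> measure_pmf.expectation ?M (\<lambda>h. ?c h / length S)"
    using assms(1,2)
    by (intro integral_mono integrable_measure_pmf_finite emp_robust_risk_le_soft_robust_cost)
      (auto simp: set_pmf_robust_exp_mechanism)
  also have "\<dots> = measure_pmf.expectation ?M ?c / length S"
    by simp
  finally have expectation_le: "measure_pmf.expectation ?M (\<lambda>h. emp_robust_risk \<gamma>' d h S)
                                  \<le> measure_pmf.expectation ?M ?c / length S" .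
  have "measure_pmf.expectation ?M (\<lambda>h. emp_robust_risk \<gamma>' d h S) - ?B \<le> emp_robust_risk \<gamma> d h\<^sub>0 S"
    if "h\<^sub>0 \<in> H" for h\<^sub>0
  proof -
    have "measure_pmf.expectation ?M ?c \<le> ?c h\<^sub>0 + ln (card H) / \<beta>"
      unfolding robust_exp_mechanism_def \<beta>_def[symmetric]
      by (rule expectation_gibbs_pmf_le[OF assms(1) that \<open>0 < \<beta>\<close>])
    then have "measure_pmf.expectation ?M ?c / length S \<le> (?c h\<^sub>0 + ln (card H) / \<beta>) / length S"
      by (simp add: divide_right_mono)
    also have "\<dots> = ?c h\<^sub>0 / length S + ?B"
      by (simp add: \<beta>_def add_divide_distrib)
    finally show ?thesis
      using expectation_le soft_robust_cost_le_emp_robust_risk[of h\<^sub>0 S] by linarith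
  qed
  then have "measure_pmf.expectation ?M (\<lambda>h. emp_robust_risk \<gamma>' d h S) - ?B
               \<le> (INF h\<in>H. emp_robust_risk \<gamma> d h S)"
    using assms(2) by (intro cINF_greatest)
  then show ?thesis
    by simp
qed

end

theorem lemma6p4:
  shows "\<exists>C::real. C > 0 \<and>
    (\<forall>(\<gamma>'::real) (\<gamma>::real) (\<epsilon>::real) (d::nat) (H::hypothesis set).
       0 < \<gamma>' \<and> \<gamma>' < \<gamma> \<and> 0 < \<epsilon> \<and> d \<ge> 1 \<and>
       finite H \<and> H \<noteq> {} \<and> H \<subseteq> (cube d \<rightarrow>\<^sub>E (UNIV :: bool set)) \<longrightarrow>
       (\<exists>M :: example list \<Rightarrow> hypothesis pmf.
          sample_nabla0_DP \<epsilon> d M \<and>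
          (\<forall>S. set_pmf (M S) \<subseteq> H) \<and>
          (\<forall>S. valid_dataset d S \<and> S \<noteq> [] \<longrightarrow>
             measure_pmf.expectation (M S) (\<lambda>h. emp_robust_risk \<gamma>' d h S)
               \<le> (INF h\<in>H. emp_robust_risk \<gamma> d h S)
                  + C * ln (real (card H))
                      / (\<epsilon> * (\<gamma> - \<gamma>') * real d * real (length S)))))"
proof (intro exI[of _ 2] conjI allI impI, goal_cases)
  case (2 \<gamma>' \<gamma> \<epsilon> d H)
  then have "\<gamma>' < \<gamma>" "0 < d" "0 < \<epsilon>" "finite H" "H \<noteq> {}"
    by auto
  then show ?case
    using sample_nabla0_DP_robust_exp_mechanism expectation_robust_exp_mechanism_le
      set_pmf_robust_exp_mechanism
    by (intro exI[of _ "robust_exp_mechanism \<epsilon> \<gamma>' \<gamma> d H"]) auto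
qed simp

end
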